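(* Let $n\ge2$ be an integer, $x_0,t_0\in\mathbb{R}$, $\beta>0$, $\lambda>0$, $\psi(t,x)=(x-x_0)^2-\beta(t-t_0)^2$, $\ell=\lambda\psi$, and let $w\in C^\infty(\mathbb{R}^2;\mathbb{R})$. With $I_2(w)$ as defined in the context, there exist expressions $A,B$, each a finite sum of terms of the form $c\,\ell_x^{\,a}\ell_{xx}^{\,b}\,\partial_x^{i}u_1\,\partial_x^{j}u_2$ with $u_1,u_2\in\{w,\partial_t w\}$, such that pointwise $$\partial_t w\; I_2(w)=\partial_t A+\partial_x B+\sum_{(r,s,m)\in D_C}d_C(r,s,m)\,\ell_x^{\,r}\ell_{xx}^{\,s}\,\partial_x^m\partial_t w\,\partial_x^{m+1}w,$$ where $D_C=\{(r,s,m)\in\mathbb{Z}_{\ge0}^3:\ r+2s+2m+1=n,\ s\ge3,\ s\text{ odd}\}$ and $$d_C(r,s,m)=(-1)^{n+m}\frac{(s-1)(2m+s)(n-2m-s-1)}{2(m+s)}\binom{n}{2m+s+1}\binom{m+s}{s}\prod_{j=1}^{s-1}(r+j).$$ In particular, if $n\le 6$ then $\partial_t w\,I_2(w)=\partial_tA+\partial_xB$.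
   Context: $\binom{j}{k}$ denotes the binomial coefficient (zero unless $0\le k\le j$). $$I_2(w)=\sum_{\substack{k\in[0,n]\\ k\ \text{even}}}\binom{n}{k}(-1)^{n-k}\ell_x^{\,n-k}\partial_x^k w-\binom{n}{2}\ell_{xx}\sum_{\substack{j\in[0,n-2]\\ j\ \text{odd}}}\binom{n-2}{j}(-1)^{n-2-j}\ell_x^{\,n-2-j}\partial_x^j w.$$ *)

theory Defs
  imports "HOL-Analysis.Analysis"
begin

text \<open>Functions on R^2 are written f :: real \<times> real \<Rightarrow> real, with points (t, x).\<close>

definition pdt :: "(real \<times> real \<Rightarrow> real) \<Rightarrow> real \<times> real \<Rightarrow> real" where
  "pdt f = (\<lambda>(t, x). deriv (\<lambda>s. f (s, x)) t)"

definition pdx :: "(real \<times> real \<Rightarrow> real) \<Rightarrow> real \<times> real \<Rightarrow> real" where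
  "pdx f = (\<lambda>(t, x). deriv (\<lambda>y. f (t, y)) x)"

fun mixed :: "bool list \<Rightarrow> (real \<times> real \<Rightarrow> real) \<Rightarrow> real \<times> real \<Rightarrow> real" where
  "mixed [] f = f"
| "mixed (d # ds) f = (if d then pdt else pdx) (mixed ds f)"

text \<open>C^\<infinity>(R^2; R): every iterated partial derivative is (Frechet) differentiable
  everywhere (hence all partial derivatives of all orders exist and are continuous).\<close>
definition smooth2 :: "(real \<times> real \<Rightarrow> real) \<Rightarrow> bool" where
  "smooth2 f \<longleftrightarrow> (\<forall>ds. mixed ds f differentiable_on UNIV)"

definition I2 :: "nat \<Rightarrow> (real \<times> real \<Rightarrow> real) \<Rightarrow> (real \<times> real \<Rightarrow> real) \<Rightarrow> real \<times> real \<Rightarrow> real" where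
  "I2 n l w p =
     (\<Sum>k\<in>{k. k \<le> n \<and> even k}. real (n choose k) * (-1) ^ (n - k) * (pdx l p) ^ (n - k) * (pdx ^^ k) w p)
     - real (n choose 2) * pdx (pdx l) p *
       (\<Sum>j\<in>{j. j \<le> n - 2 \<and> odd j}. real ((n - 2) choose j) * (-1) ^ (n - 2 - j) * (pdx l p) ^ (n - 2 - j) * (pdx ^^ j) w p)"

text \<open>A monomial c * l_x^a * l_xx^b * d_x^i u1 * d_x^j u2, where u_k = d_t w if the flag is True,
  and u_k = w otherwise.\<close>
datatype bterm = BTerm real nat nat nat nat bool bool

fun bterm_val :: "(real \<times> real \<Rightarrow> real) \<Rightarrow> (real \<times> real \<Rightarrow> real) \<Rightarrow> bterm \<Rightarrow> real \<times> real \<Rightarrow> real" where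
  "bterm_val l w (BTerm c a b i j k1 k2) p =
     c * (pdx l p) ^ a * (pdx (pdx l) p) ^ b
       * (pdx ^^ i) (if k1 then pdt w else w) p * (pdx ^^ j) (if k2 then pdt w else w) p"

definition expr_val :: "(real \<times> real \<Rightarrow> real) \<Rightarrow> (real \<times> real \<Rightarrow> real) \<Rightarrow> bterm list \<Rightarrow> real \<times> real \<Rightarrow> real" where
  "expr_val l w ts p = (\<Sum>tm\<leftarrow>ts. bterm_val l w tm p)"

definition DC :: "nat \<Rightarrow> (nat \<times> nat \<times> nat) set" where
  "DC n = {(r, s, m). r + 2 * s + 2 * m + 1 = n \<and> s \<ge> 3 \<and> odd s}"

definition dC :: "nat \<Rightarrow> nat \<Rightarrow> nat \<Rightarrow> nat \<Rightarrow> real" where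
  "dC n r s m = (-1) ^ (n + m) *
     ((real s - 1) * (2 * real m + real s) * (real n - 2 * real m - real s - 1) / (2 * (real m + real s)))
     * real (n choose (2 * m + s + 1)) * real ((m + s) choose s)
     * (\<Prod>j\<in>{1..s - 1}. real r + real j)"

end

theory Submission
  imports Defs
begin

text \<open>Since \<open>\<ell>\<^sub>x = 2\<lambda>(x - x\<^sub>0)\<close> is affine in \<open>x\<close> and independent of \<open>t\<close>, the monomials
  \<open>\<ell>\<^sub>x\<^sup>p \<ell>\<^sub>x\<^sub>x\<^sup>q \<partial>\<^sub>x\<^sup>i w\<^sub>t \<partial>\<^sub>x\<^sup>k w\<close> can be reduced modulo space-time divergences \<open>\<partial>\<^sub>t A + \<partial>\<^sub>x B\<close>:
  the product rule in \<open>x\<close> trades one \<open>x\<close>-derivative of \<open>w\<close> for one of \<open>w\<^sub>t\<close>, at the cost of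
  a monomial with \<open>\<ell>\<^sub>x\<^sup>p\<^sup>-\<^sup>1 \<ell>\<^sub>x\<^sub>x\<^sup>q\<^sup>+\<^sup>1\<close>, and the diagonal monomials are
  \<open>\<partial>\<^sub>t (\<ell>\<^sub>x\<^sup>p \<ell>\<^sub>x\<^sub>x\<^sup>q (\<partial>\<^sub>x\<^sup>m w)\<^sup>2 / 2)\<close>. Iterating, every monomial of \<open>w\<^sub>t I\<^sub>2(w)\<close> becomes a
  combination of monomials \<open>\<ell>\<^sub>x\<^sup>r \<ell>\<^sub>x\<^sub>x\<^sup>s \<partial>\<^sub>x\<^sup>m w\<^sub>t \<partial>\<^sub>x\<^sup>m\<^sup>+\<^sup>1 w\<close> with explicit binomial
  coefficients. Collecting the contributions of the two sums of \<open>I\<^sub>2\<close>, the coefficients with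
  \<open>s = 1\<close> cancel and the others are \<open>d\<^sub>C\<close>; for \<open>n \<le> 6\<close> the index set \<open>D\<^sub>C\<close> is empty.\<close>

section \<open>Partial derivatives of smooth functions\<close>

lemma mixed_append: "mixed (ds @ es) f = mixed ds (mixed es f)"
  by (induction ds) auto

lemma smooth2_mixed: "smooth2 f \<Longrightarrow> smooth2 (mixed ds f)"
  unfolding smooth2_def by (metis mixed_append)

lemma smooth2_pdx: "smooth2 f \<Longrightarrow> smooth2 (pdx f)"
  using smooth2_mixed[of f "[False]"] by simp

lemma smooth2_pdt: "smooth2 f \<Longrightarrow> smooth2 (pdt f)"
  using smooth2_mixed[of f "[True]"] by simp

lemma smooth2_pdx_power: "smooth2 f \<Longrightarrow> smooth2 ((pdx ^^ i) f)"
  by (induction i) (auto intro: smooth2_pdx)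

lemma smooth2_differentiable: "smooth2 f \<Longrightarrow> f differentiable (at z)"
  unfolding smooth2_def using mixed.simps(1)
  by (metis differentiable_on_def UNIV_I at_within_open open_UNIV)

lemma smooth2_isCont: "smooth2 f \<Longrightarrow> isCont f z"
  using smooth2_differentiable differentiable_imp_continuous_within by blast

lemma has_real_derivative_pdx:
  assumes "f differentiable (at (t, x))"
  shows "((\<lambda>y. f (t, y)) has_real_derivative pdx f (t, x)) (at x)"
proof -
  have "(\<lambda>y. f (t, y)) differentiable (at x)"
    using differentiable_chain_at[of "\<lambda>y. (t, y)" x f] assms
    by (simp add: o_def)
  then show ?thesis
    unfolding pdx_def using DERIV_deriv_iff_real_differentiable by auto
qed

lemma has_real_derivative_pdt:
  assumes "f differentiable (at (t, x))"
  shows "((\<lambda>s. f (s, x)) has_real_derivative pdt f (t, x)) (at t)"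
proof -
  have "(\<lambda>s. f (s, x)) differentiable (at t)"
    using differentiable_chain_at[of "\<lambda>s. (s, x)" t f] assms
    by (simp add: o_def)
  then show ?thesis
    unfolding pdt_def using DERIV_deriv_iff_real_differentiable by auto
qed

lemma pdx_eqI: "((\<lambda>y. f (t, y)) has_real_derivative D) (at x) \<Longrightarrow> pdx f (t, x) = D"
  unfolding pdx_def by (simp add: DERIV_imp_deriv)

lemma pdt_eqI: "((\<lambda>s. f (s, x)) has_real_derivative D) (at t) \<Longrightarrow> pdt f (t, x) = D"
  unfolding pdt_def by (simp add: DERIV_imp_deriv)

lemma second_difference_pdx_pdt:
  assumes f: "smooth2 f" and h: "h > 0"
  obtains \<sigma> \<eta> where "t < \<sigma>" "\<sigma> < t + h" "x < \<eta>" "\<eta> < x + h"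
    "f (t + h, x + h) - f (t + h, x) - f (t, x + h) + f (t, x) = h * (h * pdx (pdt f) (\<sigma>, \<eta>))"
proof -
  have "\<exists>\<sigma>. t < \<sigma> \<and> \<sigma> < t + h \<and>
      (f (t + h, x + h) - f (t + h, x)) - (f (t, x + h) - f (t, x))
        = (t + h - t) * (pdt f (\<sigma>, x + h) - pdt f (\<sigma>, x))"
    by (rule MVT2) (use h in \<open>auto intro!: derivative_eq_intros has_real_derivative_pdt
        smooth2_differentiable f\<close>)
  then obtain \<sigma> where \<sigma>: "t < \<sigma>" "\<sigma> < t + h"
    "(f (t + h, x + h) - f (t + h, x)) - (f (t, x + h) - f (t, x))
       = (t + h - t) * (pdt f (\<sigma>, x + h) - pdt f (\<sigma>, x))"
    by blast
  obtain \<eta> where \<eta>: "x < \<eta>" "\<eta> < x + h"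
    "pdt f (\<sigma>, x + h) - pdt f (\<sigma>, x) = (x + h - x) * pdx (pdt f) (\<sigma>, \<eta>)"
    using MVT2[of x "x + h" "\<lambda>y. pdt f (\<sigma>, y)" "\<lambda>y. pdx (pdt f) (\<sigma>, y)"] h
    by (auto intro!: has_real_derivative_pdx smooth2_differentiable smooth2_pdt f)
  show thesis
    by (rule that[OF \<sigma>(1,2) \<eta>(1,2)]) (use \<sigma>(3) \<eta>(3) in \<open>simp add: algebra_simps\<close>)
qed

lemma second_difference_pdt_pdx:
  assumes f: "smooth2 f" and h: "h > 0"
  obtains \<tau> \<xi> where "t < \<tau>" "\<tau> < t + h" "x < \<xi>" "\<xi> < x + h"
    "f (t + h, x + h) - f (t + h, x) - f (t, x + h) + f (t, x) = h * (h * pdt (pdx f) (\<tau>, \<xi>))"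
proof -
  have "\<exists>\<xi>. x < \<xi> \<and> \<xi> < x + h \<and>
      (f (t + h, x + h) - f (t, x + h)) - (f (t + h, x) - f (t, x))
        = (x + h - x) * (pdx f (t + h, \<xi>) - pdx f (t, \<xi>))"
    by (rule MVT2) (use h in \<open>auto intro!: derivative_eq_intros has_real_derivative_pdx
        smooth2_differentiable f\<close>)
  then obtain \<xi> where \<xi>: "x < \<xi>" "\<xi> < x + h"
    "(f (t + h, x + h) - f (t, x + h)) - (f (t + h, x) - f (t, x))
       = (x + h - x) * (pdx f (t + h, \<xi>) - pdx f (t, \<xi>))"
    by blast
  obtain \<tau> where \<tau>: "t < \<tau>" "\<tau> < t + h"
    "pdx f (t + h, \<xi>) - pdx f (t, \<xi>) = (t + h - t) * pdt (pdx f) (\<tau>, \<xi>)"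
    using MVT2[of t "t + h" "\<lambda>s. pdx f (s, \<xi>)" "\<lambda>s. pdt (pdx f) (s, \<xi>)"] h
    by (auto intro!: has_real_derivative_pdt smooth2_differentiable smooth2_pdx f)
  show thesis
    by (rule that[OF \<tau>(1,2) \<xi>(1,2)]) (use \<xi>(3) \<tau>(3) in \<open>simp add: algebra_simps\<close>)
qed

text \<open>Schwarz's theorem: both mixed second derivatives are limits of the same second difference
  quotient, by the two mean value expansions above.\<close>
lemma pdt_pdx_commute_at:
  assumes f: "smooth2 f"
  shows "pdt (pdx f) (t, x) = pdx (pdt f) (t, x)"
proof (rule ccontr)
  define F where "F = pdx (pdt f)"
  define G where "G = pdt (pdx f)"
  assume "pdt (pdx f) (t, x) \<noteq> pdx (pdt f) (t, x)"
  then have e: "\<bar>G (t, x) - F (t, x)\<bar> / 2 > 0" (is "?e > 0")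
    unfolding F_def G_def by simp
  obtain d1 where d1: "d1 > 0" "\<And>z. dist z (t, x) < d1 \<Longrightarrow> dist (F z) (F (t, x)) < ?e"
    using smooth2_isCont[OF smooth2_pdx[OF smooth2_pdt[OF f]], of "(t, x)"] e
    unfolding continuous_at_eps_delta F_def by blast
  obtain d2 where d2: "d2 > 0" "\<And>z. dist z (t, x) < d2 \<Longrightarrow> dist (G z) (G (t, x)) < ?e"
    using smooth2_isCont[OF smooth2_pdt[OF smooth2_pdx[OF f]], of "(t, x)"] e
    unfolding continuous_at_eps_delta G_def by blast
  define h where "h = min d1 d2 / 2"
  have h: "h > 0" using d1 d2 unfolding h_def by auto
  have near: "dist (a, b) (t, x) < min d1 d2" if "t < a" "a < t + h" "x < b" "b < x + h" for a b
  proof -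
    have "dist (a, b) (t, x) \<le> dist a t + dist b x"
      by (metis diff_Pair dist_norm norm_Pair_le)
    also have "\<dots> < 2 * h" using that by (simp add: dist_real_def)
    finally show ?thesis unfolding h_def by simp
  qed
  obtain \<sigma> \<eta> where \<sigma>\<eta>: "t < \<sigma>" "\<sigma> < t + h" "x < \<eta>" "\<eta> < x + h"
    "f (t + h, x + h) - f (t + h, x) - f (t, x + h) + f (t, x) = h * (h * F (\<sigma>, \<eta>))"
    using second_difference_pdx_pdt[OF f h] unfolding F_def by blast
  obtain \<tau> \<xi> where \<tau>\<xi>: "t < \<tau>" "\<tau> < t + h" "x < \<xi>" "\<xi> < x + h"
    "f (t + h, x + h) - f (t + h, x) - f (t, x + h) + f (t, x) = h * (h * G (\<tau>, \<xi>))"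
    using second_difference_pdt_pdx[OF f h] unfolding G_def by blast
  have "F (\<sigma>, \<eta>) = G (\<tau>, \<xi>)" using \<sigma>\<eta>(5) \<tau>\<xi>(5) h by simp
  moreover have "dist (F (\<sigma>, \<eta>)) (F (t, x)) < ?e" using d1 near[OF \<sigma>\<eta>(1-4)] by simp
  moreover have "dist (G (\<tau>, \<xi>)) (G (t, x)) < ?e" using d2 near[OF \<tau>\<xi>(1-4)] by simp
  ultimately show False by (simp add: dist_real_def abs_if split: if_splits)
qed

lemma pdt_pdx_commute: "smooth2 f \<Longrightarrow> pdt (pdx f) = pdx (pdt f)"
  using pdt_pdx_commute_at by fastforce

lemma pdt_pdx_power_commute: "smooth2 f \<Longrightarrow> pdt ((pdx ^^ i) f) = (pdx ^^ i) (pdt f)"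
proof (induction i)
  case (Suc i)
  then show ?case using pdt_pdx_commute[OF smooth2_pdx_power[OF Suc.prems, of i]] by simp
qed simp

section \<open>Expressions in divergence form\<close>

fun bterm_scale :: "real \<Rightarrow> bterm \<Rightarrow> bterm" where
  "bterm_scale r (BTerm c a b i j k1 k2) = BTerm (r * c) a b i j k1 k2"

lemma bterm_val_scale: "bterm_val l w (bterm_scale r T) p = r * bterm_val l w T p"
  by (cases T) simp

lemma expr_val_Nil: "expr_val l w [] = (\<lambda>_. 0)"
  unfolding expr_val_def by auto

lemma expr_val_single: "expr_val l w [T] = bterm_val l w T"
  unfolding expr_val_def by auto

lemma expr_val_Cons: "expr_val l w (T # A) p = bterm_val l w T p + expr_val l w A p"
  unfolding expr_val_def by simp

lemma expr_val_append: "expr_val l w (A @ B) p = expr_val l w A p + expr_val l w B p"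
  unfolding expr_val_def by simp

lemma expr_val_scale: "expr_val l w (map (bterm_scale r) A) p = r * expr_val l w A p"
  unfolding expr_val_def by (induction A) (auto simp: bterm_val_scale algebra_simps)

lemma pdx_const: "pdx (\<lambda>_. c) = (\<lambda>_. 0)"
  unfolding pdx_def by auto

lemma pdt_const: "pdt (\<lambda>_. c) = (\<lambda>_. 0)"
  unfolding pdt_def by auto

lemma pdx_affine: "pdx (\<lambda>(t, x). a * x + b) = (\<lambda>_. a)"
proof -
  have "pdx (\<lambda>(t, x). a * x + b) (t, x) = a" for t x
    by (rule pdx_eqI) (auto intro!: derivative_eq_intros)
  then show ?thesis by auto
qed

locale affine_weight =
  fixes w l :: "real \<times> real \<Rightarrow> real" and a b :: real
  assumes smooth_w: "smooth2 w"
    and pdx_weight: "pdx l = (\<lambda>(t, x). a * x + b)"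
begin

definition wder :: "nat \<Rightarrow> bool \<Rightarrow> real \<times> real \<Rightarrow> real" where
  "wder i k = (pdx ^^ i) (if k then pdt w else w)"

lemma smooth2_wder: "smooth2 (wder i k)"
  unfolding wder_def using smooth_w smooth2_pdt smooth2_pdx_power by auto

lemma pdx_wder: "pdx (wder i k) = wder (Suc i) k"
  unfolding wder_def by simp

lemma pdt_wder: "pdt (wder i False) = wder i True"
  unfolding wder_def using pdt_pdx_power_commute[OF smooth_w] by simp

lemma bterm_val_eq:
  "bterm_val l w (BTerm c p q i j k1 k2) (t, x) =
     c * (a * x + b) ^ p * a ^ q * wder i k1 (t, x) * wder j k2 (t, x)"
  by (simp add: pdx_weight pdx_affine wder_def)

lemma bterm_val_has_pdx:
  "((\<lambda>y. bterm_val l w (BTerm c p q i j k1 k2) (t, y)) has_real_derivative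
     bterm_val l w (BTerm (c * real p) (p - 1) (q + 1) i j k1 k2) (t, x)
     + bterm_val l w (BTerm c p q (i + 1) j k1 k2) (t, x)
     + bterm_val l w (BTerm c p q i (j + 1) k1 k2) (t, x)) (at x)"
proof -
  have "((\<lambda>y. wder i k (t, y)) has_real_derivative wder (Suc i) k (t, x)) (at x)" for i k
    using has_real_derivative_pdx[OF smooth2_differentiable[OF smooth2_wder]] pdx_wder by simp
  note wder_pdx = this
  show ?thesis unfolding bterm_val_eq
    by (rule derivative_eq_intros refl wder_pdx)+ (cases p, auto simp: algebra_simps)
qed

lemma bterm_val_has_pdt:
  "((\<lambda>s. bterm_val l w (BTerm c p q i j k1 k2) (s, x)) has_real_derivative
     c * (a * x + b) ^ p * a ^ q
       * (pdt (wder i k1) (t, x) * wder j k2 (t, x) + wder i k1 (t, x) * pdt (wder j k2) (t, x)))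
   (at t)"
proof -
  have "((\<lambda>s. wder i k (s, x)) has_real_derivative pdt (wder i k) (t, x)) (at t)" for i k
    using has_real_derivative_pdt[OF smooth2_differentiable[OF smooth2_wder]] .
  note wder_pdt = this
  show ?thesis unfolding bterm_val_eq
    by (rule derivative_eq_intros refl wder_pdt)+ (auto simp: algebra_simps)
qed

lemma expr_val_differentiable_x: "(\<lambda>y. expr_val l w A (t, y)) differentiable (at x)"
proof (induction A)
  case (Cons T A)
  have "(\<lambda>y. bterm_val l w T (t, y)) differentiable (at x)"
    by (cases T) (use bterm_val_has_pdx real_differentiable_def in blast)
  with Cons show ?case unfolding expr_val_Cons by (intro differentiable_add)
qed (simp add: expr_val_Nil)

lemma expr_val_differentiable_t: "(\<lambda>s. expr_val l w A (s, x)) differentiable (at t)"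
proof (induction A)
  case (Cons T A)
  have "(\<lambda>s. bterm_val l w T (s, x)) differentiable (at t)"
    by (cases T) (use bterm_val_has_pdt real_differentiable_def in blast)
  with Cons show ?case unfolding expr_val_Cons by (intro differentiable_add)
qed (simp add: expr_val_Nil)

lemma expr_val_has_pdx:
  "((\<lambda>y. expr_val l w A (t, y)) has_real_derivative pdx (expr_val l w A) (t, x)) (at x)"
  using expr_val_differentiable_x DERIV_deriv_iff_real_differentiable unfolding pdx_def by auto

lemma expr_val_has_pdt:
  "((\<lambda>s. expr_val l w A (s, x)) has_real_derivative pdt (expr_val l w A) (t, x)) (at t)"
  using expr_val_differentiable_t DERIV_deriv_iff_real_differentiable unfolding pdt_def by auto

definition divergence_form :: "(real \<times> real \<Rightarrow> real) \<Rightarrow> bool" where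
  "divergence_form F \<longleftrightarrow>
     (\<exists>A B. \<forall>t x. F (t, x) = pdt (expr_val l w A) (t, x) + pdx (expr_val l w B) (t, x))"

lemma divergence_form_lincomb:
  assumes "divergence_form F" "divergence_form G"
  shows "divergence_form (\<lambda>z. c * F z + d * G z)"
proof -
  obtain A1 B1 where F: "\<And>t x. F (t, x) = pdt (expr_val l w A1) (t, x) + pdx (expr_val l w B1) (t, x)"
    using assms(1) unfolding divergence_form_def by blast
  obtain A2 B2 where G: "\<And>t x. G (t, x) = pdt (expr_val l w A2) (t, x) + pdx (expr_val l w B2) (t, x)"
    using assms(2) unfolding divergence_form_def by blast
  define A where "A = map (bterm_scale c) A1 @ map (bterm_scale d) A2"
  define B where "B = map (bterm_scale c) B1 @ map (bterm_scale d) B2"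
  have "pdt (expr_val l w A) (t, x) = c * pdt (expr_val l w A1) (t, x) + d * pdt (expr_val l w A2) (t, x)"
    for t x unfolding A_def expr_val_append expr_val_scale
    by (rule pdt_eqI) (rule derivative_eq_intros expr_val_has_pdt refl | simp)+
  moreover have "pdx (expr_val l w B) (t, x) = c * pdx (expr_val l w B1) (t, x) + d * pdx (expr_val l w B2) (t, x)"
    for t x unfolding B_def expr_val_append expr_val_scale
    by (rule pdx_eqI) (rule derivative_eq_intros expr_val_has_pdx refl | simp)+
  ultimately show ?thesis unfolding divergence_form_def
    by (intro exI[of _ A] exI[of _ B]) (auto simp: F G algebra_simps)
qed

lemma divergence_form_zero: "divergence_form (\<lambda>_. 0)"
  unfolding divergence_form_def by (intro exI[of _ "[]"]) (simp add: expr_val_Nil pdt_const pdx_const)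

lemma divergence_form_cong:
  "divergence_form G \<Longrightarrow> (\<And>t x. F (t, x) = G (t, x)) \<Longrightarrow> divergence_form F"
  unfolding divergence_form_def by metis

lemma divergence_form_pdx: "divergence_form (pdx (bterm_val l w T))"
  unfolding divergence_form_def
  by (intro exI[of _ "[]"] exI[of _ "[T]"]) (simp add: expr_val_Nil expr_val_single pdt_const)

lemma divergence_form_pdt: "divergence_form (pdt (bterm_val l w T))"
  unfolding divergence_form_def
  by (intro exI[of _ "[T]"] exI[of _ "[]"]) (simp add: expr_val_Nil expr_val_single pdx_const)

lemma divergence_form_scale: "divergence_form F \<Longrightarrow> divergence_form (\<lambda>z. c * F z)"
  using divergence_form_lincomb[OF _ divergence_form_zero, of F c 0] by simp

lemma divergence_form_sum:
  "finite S \<Longrightarrow> (\<And>i. i \<in> S \<Longrightarrow> divergence_form (f i)) \<Longrightarrow> divergence_form (\<lambda>z. \<Sum>i\<in>S. f i z)"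
proof (induction S rule: finite_induct)
  case (insert i S)
  then show ?case using divergence_form_lincomb[of "f i" "\<lambda>z. \<Sum>i\<in>S. f i z" 1 1] by simp
qed (simp add: divergence_form_zero)

end

section \<open>Reduction of monomials to normal form\<close>

fun falling_factorial :: "nat \<Rightarrow> nat \<Rightarrow> real" where
  "falling_factorial p 0 = 1"
| "falling_factorial p (Suc k) = real p * falling_factorial (p - 1) k"

lemma falling_factorial_eq_0: "p < s \<Longrightarrow> falling_factorial p s = 0"
proof (induction s arbitrary: p)
  case (Suc k)
  then show ?case by (cases p) auto
qed simp

lemma falling_factorial_add: "falling_factorial (r + k) k = (\<Prod>j\<in>{1..k}. real r + real j)"
  by (induction k) (simp_all add: prod.nat_ivl_Suc' algebra_simps)

definition normal_coeff :: "nat \<Rightarrow> nat \<Rightarrow> nat \<Rightarrow> real" where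
  "normal_coeff p m s = (-1) ^ (m + s) * real ((m + s) choose s) * falling_factorial p s"

lemma normal_coeff_rec:
  assumes "m > 0 \<or> s > 0"
  shows "normal_coeff p m s = (if m = 0 then 0 else - normal_coeff p (m - 1) s)
     + (if s = 0 then 0 else - real p * normal_coeff (p - 1) m (s - 1))"
proof (cases m)
  case 0
  with assms obtain k where "s = Suc k" by (cases s) auto
  with 0 show ?thesis unfolding normal_coeff_def by simp
next
  case (Suc j)
  show ?thesis
  proof (cases s)
    case (Suc k)
    have "(Suc j + Suc k) choose (Suc k) = ((j + Suc k) choose (Suc k)) + ((Suc j + k) choose k)"
      by simp
    with \<open>m = Suc j\<close> Suc show ?thesis unfolding normal_coeff_def by (simp add: algebra_simps)
  qed (simp add: Suc normal_coeff_def)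
qed

lemma normal_coeff_eq_0: "p < s \<Longrightarrow> normal_coeff p m s = 0"
  unfolding normal_coeff_def by (simp add: falling_factorial_eq_0)

lemma sum_lessThan_if_less: "(M::nat) \<le> N \<Longrightarrow> (\<Sum>m<N. if m < M then f m else 0) = (\<Sum>m<M. f m)"
proof -
  assume "M \<le> N"
  then have "{m \<in> {..<N}. m < M} = {..<M}" by auto
  then show ?thesis using sum.inter_filter[of "{..<N}" f "\<lambda>m. m < M"] by simp
qed

context affine_weight
begin

text \<open>\<open>monomial p q i k\<close> stands for \<open>\<ell>\<^sub>x\<^sup>p \<ell>\<^sub>x\<^sub>x\<^sup>q \<partial>\<^sub>x\<^sup>i w\<^sub>t \<partial>\<^sub>x\<^sup>k w\<close>.\<close>
definition monomial :: "nat \<Rightarrow> nat \<Rightarrow> nat \<Rightarrow> nat \<Rightarrow> real \<times> real \<Rightarrow> real" where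
  "monomial p q i k = bterm_val l w (BTerm 1 p q i k True False)"

lemma divergence_form_monomial_product_rule:
  "divergence_form (\<lambda>z. monomial p q (i + 1) k z + monomial p q i (k + 1) z + real p * monomial (p - 1) (q + 1) i k z)"
proof (rule divergence_form_cong[OF divergence_form_pdx[of "BTerm 1 p q i k True False"]])
  fix t x
  show "monomial p q (i + 1) k (t, x) + monomial p q i (k + 1) (t, x) + real p * monomial (p - 1) (q + 1) i k (t, x)
      = pdx (bterm_val l w (BTerm 1 p q i k True False)) (t, x)"
    unfolding monomial_def pdx_eqI[OF bterm_val_has_pdx] by simp
qed

lemma divergence_form_monomial_diagonal: "divergence_form (monomial p q m m)"
proof (rule divergence_form_cong[OF divergence_form_pdt[of "BTerm (1/2) p q m m False False"]])
  fix t x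
  show "monomial p q m m (t, x) = pdt (bterm_val l w (BTerm (1/2) p q m m False False)) (t, x)"
    unfolding monomial_def pdt_eqI[OF bterm_val_has_pdt] bterm_val_eq pdt_wder by simp
qed

definition normal_form :: "nat \<Rightarrow> nat \<Rightarrow> nat \<Rightarrow> nat \<Rightarrow> real \<times> real \<Rightarrow> real" where
  "normal_form p q i d z = (\<Sum>m < (d + 1) div 2.
     normal_coeff p m (d - 1 - 2 * m) * monomial (p - (d - 1 - 2 * m)) (q + (d - 1 - 2 * m)) (i + m) (i + m + 1) z)"

lemma normal_form_rec:
  "normal_form p q i (d + 2) z = - normal_form p q (i + 1) d z - real p * normal_form (p - 1) (q + 1) i (d + 1) z"
proof -
  let ?M = "(d + 1) div 2"
  define monomial' where "monomial' m s = monomial (p - s) (q + s) (i + m) (i + m + 1) z" for m s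
  define g where "g m = normal_coeff p m (d + 1 - 2 * m) * monomial' m (d + 1 - 2 * m)" for m
  define g1 where "g1 m = (if m = 0 then 0 else - normal_coeff p (m - 1) (d + 1 - 2 * m) * monomial' m (d + 1 - 2 * m))" for m
  define g2 where "g2 m = (if d + 1 - 2 * m = 0 then 0
     else - real p * normal_coeff (p - 1) m (d - 2 * m) * monomial' m (d + 1 - 2 * m))" for m
  have "(d + 2 + 1) div 2 = Suc ?M" by simp
  then have "normal_form p q i (d + 2) z = (\<Sum>m < Suc ?M. g m)"
    unfolding normal_form_def g_def monomial'_def by (intro sum.cong) (auto simp: numeral_2_eq_2)
  also have "\<dots> = (\<Sum>m < Suc ?M. g1 m) + (\<Sum>m < Suc ?M. g2 m)"
  proof -
    have "g m = g1 m + g2 m" if "m < Suc ?M" for m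
      using that normal_coeff_rec[of m "d + 1 - 2 * m" p]
      unfolding g_def g1_def g2_def by (auto simp: algebra_simps)
    then show ?thesis by (simp add: sum.distrib[symmetric])
  qed
  also have "(\<Sum>m < Suc ?M. g1 m) = - normal_form p q (i + 1) d z"
    unfolding normal_form_def g1_def monomial'_def sum.lessThan_Suc_shift
    by (simp add: sum_negf algebra_simps)
  also have "(\<Sum>m < Suc ?M. g2 m) = - real p * normal_form (p - 1) (q + 1) i (d + 1) z"
  proof -
    have g2_eq: "g2 m = - real p * (normal_coeff (p - 1) m (d + 1 - 1 - 2 * m)
        * monomial (p - 1 - (d + 1 - 1 - 2 * m)) (q + 1 + (d + 1 - 1 - 2 * m)) (i + m) (i + m + 1) z)"
      if "m < (d + 1 + 1) div 2" for m
    proof -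
      from that have "2 * m \<le> d" by auto
      then show ?thesis by (simp add: g2_def monomial'_def Suc_diff_le)
    qed
    have "(\<Sum>m < Suc ?M. g2 m) = (\<Sum>m < Suc ?M. if m < (d + 1 + 1) div 2 then g2 m else 0)"
      by (intro sum.cong) (auto simp: g2_def)
    also have "\<dots> = (\<Sum>m < (d + 1 + 1) div 2. g2 m)"
      by (rule sum_lessThan_if_less) simp
    also have "\<dots> = - real p * normal_form (p - 1) (q + 1) i (d + 1) z"
      unfolding normal_form_def sum_distrib_left using g2_eq by (intro sum.cong) auto
    finally show ?thesis .
  qed
  finally show ?thesis by simp
qed

lemma divergence_form_monomial_minus_normal_form:
  "divergence_form (\<lambda>z. monomial p q i (i + d) z - normal_form p q i d z)"
proof (induction d arbitrary: p q i rule: less_induct)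
  case (less d)
  consider "d = 0" | "d = 1" | d' where "d = d' + 2"
    by (metis add_2_eq_Suc' not0_implies_Suc One_nat_def)
  then show ?case
  proof cases
    case 1
    then show ?thesis
      by (intro divergence_form_cong[OF divergence_form_monomial_diagonal[of p q i]])
        (simp add: normal_form_def)
  next
    case 2
    then show ?thesis
      by (intro divergence_form_cong[OF divergence_form_zero]) (simp add: normal_form_def normal_coeff_def)
  next
    case 3
    have rec: "normal_form p q i (Suc (Suc d')) z
        = - normal_form p q (i + 1) d' z - real p * normal_form (p - 1) (q + 1) i (d' + 1) z" for z
      using normal_form_rec[of p q i d' z] by simp
    have "divergence_form (\<lambda>z. 1 * (monomial p q (i + 1) (i + d' + 1) z + monomial p q i (i + d' + 1 + 1) z
        + real p * monomial (p - 1) (q + 1) i (i + d' + 1) z)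
      + (-1) * (monomial p q (i + 1) (i + 1 + d') z - normal_form p q (i + 1) d' z))"
      using less[of d' p q "i + 1"] 3
      by (intro divergence_form_lincomb divergence_form_monomial_product_rule) simp
    then have "divergence_form (\<lambda>z. 1 * (monomial p q i (i + d) z - normal_form p q i d z + real p *
        (monomial (p - 1) (q + 1) i (i + (d' + 1)) z - normal_form (p - 1) (q + 1) i (d' + 1) z))
      + (- real p) * (monomial (p - 1) (q + 1) i (i + (d' + 1)) z - normal_form (p - 1) (q + 1) i (d' + 1) z))"
      using less[of "d' + 1" "p - 1" "q + 1" i] 3
      by (intro divergence_form_lincomb) (auto elim!: divergence_form_cong simp: rec algebra_simps)
    then show ?thesis by (rule divergence_form_cong) simp
  qed
qed

end

section \<open>Collecting coefficients\<close>

definition binom_sign :: "nat \<Rightarrow> nat \<Rightarrow> real" where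
  "binom_sign n k = real (n choose k) * (-1) ^ (n - k)"

lemma choose_two_times_choose:
  assumes "j + 2 \<le> n"
  shows "2 * (n choose 2) * ((n - 2) choose j) = (n choose (j + 1)) * (j + 1) * (n - (j + 1))"
proof -
  have "(n choose 2) * ((n - 2) choose j) = (n choose (j + 2)) * ((j + 2) choose 2)"
    using choose_mult[of 2 "j + 2" n] assms by simp
  moreover have "2 * ((j + 2) choose 2) = (j + 2) * (j + 1)"
    using binomial_absorption[of 1 "j + 2"] by (simp add: numeral_2_eq_2)
  moreover have "(j + 2) * (n choose (j + 2)) = (n - (j + 1)) * (n choose (j + 1))"
    using binomial_absorption[of "j + 1" n] binomial_absorb_comp[of n "j + 1"]
    by (simp add: numeral_2_eq_2)
  ultimately show ?thesis by (metis mult.assoc mult.commute)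
qed

lemma collected_binomials:
  assumes n: "n = r + 2 * m + 2 * s + 1" and s: "s \<ge> 1"
  shows "real (n choose (2 * m + s + 1)) * real ((m + s) choose s) * (real r + real s)
      - real (n choose 2) * real ((n - 2) choose (2 * m + s)) * real ((m + (s - 1)) choose (s - 1))
    = - ((real s - 1) * (2 * real m + real s) * (real r + real s) / (2 * (real m + real s)))
      * real (n choose (2 * m + s + 1)) * real ((m + s) choose s)"
proof -
  define X where "X = real (n choose (2 * m + s + 1))"
  define Y where "Y = real ((m + s) choose s)"
  have "2 * m + s + 2 \<le> n" "n - (2 * m + s + 1) = r + s" using n s by simp_all
  from choose_two_times_choose[OF this(1), unfolded this(2)]
  have Z: "real (n choose 2) * real ((n - 2) choose (2 * m + s)) = X * (2 * m + s + 1) * (r + s) / 2"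
    unfolding X_def by (simp add: field_simps flip: of_nat_mult)
  have ms: "real m + real s > 0" using s by simp
  have "(m + s) * ((m + (s - 1)) choose (s - 1)) = s * ((m + s) choose s)"
    using Suc_times_binomial[of "s - 1" "m + (s - 1)"] s by (simp add: mult.commute)
  then have "(real m + real s) * real ((m + (s - 1)) choose (s - 1)) = real s * Y"
    unfolding Y_def by (metis of_nat_add of_nat_mult)
  then have W: "real ((m + (s - 1)) choose (s - 1)) = real s * Y / (real m + real s)"
    using ms by (simp add: field_simps)
  show ?thesis unfolding X_def[symmetric] Y_def[symmetric] Z W using ms
    by (simp add: field_simps)
qed

text \<open>The even and the odd sum of \<open>I\<^sub>2\<close> each contribute one term to the coefficient of
  \<open>\<ell>\<^sub>x\<^sup>r \<ell>\<^sub>x\<^sub>x\<^sup>s \<partial>\<^sub>x\<^sup>m w\<^sub>t \<partial>\<^sub>x\<^sup>m\<^sup>+\<^sup>1 w\<close>.\<close>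
lemma collected_coeff_eq_dC:
  assumes s: "odd s" and le: "2 * m + 2 * s + 1 \<le> n"
  shows "binom_sign n (2 * m + s + 1) * normal_coeff (n - (2 * m + s + 1)) m s
     - real (n choose 2) * (binom_sign (n - 2) (2 * m + s) * normal_coeff (n - 2 - (2 * m + s)) m (s - 1))
     = dC n (n - (2 * m + 2 * s + 1)) s m"
proof -
  obtain r where n: "n = r + 2 * m + 2 * s + 1"
    using le by (metis add.commute le_add_diff_inverse add.assoc)
  obtain u where u: "s = Suc (2 * u)" using s oddE by fastforce
  define P where "P = falling_factorial (r + 2 * u) (2 * u)"
  have ff: "falling_factorial (n - (2 * m + s + 1)) s = (real r + real s) * P"
    "falling_factorial (n - 2 - (2 * m + s)) (s - 1) = P"
    "(\<Prod>j\<in>{1..s - 1}. real (n - (2 * m + 2 * s + 1)) + real j) = P"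
    unfolding P_def falling_factorial_add[symmetric] using n u
    by (simp_all add: ac_simps)
  have signs: "(-1::real) ^ (n - (2 * m + s + 1)) = - ((-1) ^ r)"
    "(-1::real) ^ (m + s) = - ((-1) ^ m)"
    "(-1::real) ^ (n - 2 - (2 * m + s)) = (-1) ^ r"
    "(-1::real) ^ (m + (s - 1)) = (-1) ^ m"
    "(-1::real) ^ (n + m) = - ((-1) ^ (r + m))"
    using n u by (simp_all add: power_add power_mult)
  define X where "X = real (n choose (2 * m + s + 1))"
  define Y where "Y = real ((m + s) choose s)"
  define B where "B = real (n choose 2)"
  define C where "C = real ((n - 2) choose (2 * m + s))"
  define W where "W = real ((m + (s - 1)) choose (s - 1))"
  have "binom_sign n (2 * m + s + 1) * normal_coeff (n - (2 * m + s + 1)) m s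
      - real (n choose 2) * (binom_sign (n - 2) (2 * m + s) * normal_coeff (n - 2 - (2 * m + s)) m (s - 1))
    = (-1) ^ (r + m) * P * (X * Y * (real r + real s) - B * C * W)"
    unfolding binom_sign_def normal_coeff_def ff signs
      X_def[symmetric] Y_def[symmetric] B_def[symmetric] C_def[symmetric] W_def[symmetric]
    by (simp add: power_add algebra_simps)
  also have "\<dots> = dC n (n - (2 * m + 2 * s + 1)) s m"
  proof -
    have "real n - 2 * real m - real s - 1 = real r + real s" using n by simp
    then show ?thesis
      using collected_binomials[OF n] u
      unfolding dC_def ff signs X_def[symmetric] Y_def[symmetric] B_def[symmetric] C_def[symmetric]
        W_def[symmetric]
      by simp
  qed
  finally show ?thesis .
qed

lemma sum_split_odd_reindex:
  fixes G :: "nat \<Rightarrow> nat \<Rightarrow> nat \<Rightarrow> real"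
  assumes K: "finite K" "\<forall>k\<in>K. k \<le> n"
  shows "(\<Sum>k\<in>K. \<Sum>m < (k + 1) div 2. G k m (k - 1 - 2 * m)) =
    (\<Sum>m<n. \<Sum>s<n. if 2 * m + s + 1 \<in> K then G (2 * m + s + 1) m s else 0)"
proof -
  have below: "m < (k + 1) div 2 \<longleftrightarrow> 2 * m + 1 \<le> k" for m k :: nat by presburger
  define H where "H = (\<lambda>(m, s). G (2 * m + s + 1) m s)"
  have "(\<Sum>k\<in>K. \<Sum>m < (k + 1) div 2. G k m (k - 1 - 2 * m))
      = (\<Sum>(k, m) \<in> Sigma K (\<lambda>k. {..<(k + 1) div 2}). G k m (k - 1 - 2 * m))"
    by (rule sum.Sigma) (use K in auto)
  also have "\<dots> = (\<Sum>x \<in> {x \<in> {..<n} \<times> {..<n}. 2 * fst x + snd x + 1 \<in> K}. H x)"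
    by (rule sum.reindex_bij_witness[where i = "\<lambda>(m, s). (2 * m + s + 1, m)"
          and j = "\<lambda>(k, m). (m, k - 1 - 2 * m)"]) (use K(2) in \<open>force simp: below H_def\<close>)+
  also have "\<dots> = (\<Sum>m<n. \<Sum>s<n. if 2 * m + s + 1 \<in> K then G (2 * m + s + 1) m s else 0)"
    unfolding sum.inter_filter[OF finite_cartesian_product[OF finite_lessThan finite_lessThan]]
      sum.cartesian_product H_def by (intro sum.cong) auto
  finally show ?thesis .
qed

lemma collected_coeff:
  "(if 2 * m + s + 1 \<in> {k. k \<le> n \<and> even k}
      then binom_sign n (2 * m + s + 1) * normal_coeff (n - (2 * m + s + 1)) m s else 0)
   - real (n choose 2) * (if s = 0 then 0 else if 2 * m + s \<in> {j. j \<le> n - 2 \<and> odd j}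
      then binom_sign (n - 2) (2 * m + s) * normal_coeff (n - 2 - (2 * m + s)) m (s - 1) else 0)
   = (if 3 \<le> s \<and> odd s \<and> 2 * m + 2 * s + 1 \<le> n then dC n (n - (2 * m + 2 * s + 1)) s m else 0)"
proof (cases "odd s")
  case odd: True
  show ?thesis
  proof (cases "2 * m + 2 * s + 1 \<le> n")
    case True
    have mem: "2 * m + s + 1 \<in> {k. k \<le> n \<and> even k}" "s \<noteq> 0" "2 * m + s \<in> {j. j \<le> n - 2 \<and> odd j}"
      using odd True odd_pos[OF odd] by auto
    have "s = 1 \<or> 3 \<le> s" using odd by presburger
    then have "dC n (n - (2 * m + 2 * s + 1)) s m
        = (if 3 \<le> s \<and> odd s \<and> 2 * m + 2 * s + 1 \<le> n then dC n (n - (2 * m + 2 * s + 1)) s m else 0)"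
      using odd True by (auto simp: dC_def)
    then show ?thesis
      unfolding if_P[OF mem(1)] if_not_P[OF mem(2)] if_P[OF mem(3)] collected_coeff_eq_dC[OF odd True] .
  next
    case False
    with odd have "n - (2 * m + s + 1) < s" "s \<noteq> 1 \<Longrightarrow> n - 2 - (2 * m + s) < s - 1" by presburger+
    with False show ?thesis by (auto simp: normal_coeff_eq_0)
  qed
qed auto

lemma sum_lessThan_shift:
  "(n::nat) \<ge> 1 \<Longrightarrow> f (n - 1) = 0 \<Longrightarrow> (\<Sum>s<n. f s) = (\<Sum>s<n. if s = 0 then 0 else f (s - 1))"
proof -
  assume "n \<ge> 1" "f (n - 1) = 0"
  then have "(\<Sum>s<Suc n. if s = 0 then 0 else f (s - 1)) = (\<Sum>s<n. if s = 0 then 0 else f (s - 1))"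
    by simp
  then show ?thesis unfolding sum.lessThan_Suc_shift by simp
qed

lemma sum_DC:
  "(\<Sum>(r, s, m)\<in>DC n. F r s m) =
    (\<Sum>m<n. \<Sum>s<n. if 3 \<le> s \<and> odd s \<and> 2 * m + 2 * s + 1 \<le> n then F (n - (2 * m + 2 * s + 1)) s m else 0)"
proof -
  define P where "P = {x \<in> {..<n} \<times> {..<n}. 3 \<le> snd x \<and> odd (snd x) \<and> 2 * fst x + 2 * snd x + 1 \<le> n}"
  define g where "g = (\<lambda>(m, s). (n - (2 * m + 2 * s + 1), s, m))"
  have img: "DC n = g ` P"
  proof
    show "DC n \<subseteq> g ` P"
    proof
      fix y assume "y \<in> DC n"
      then obtain r s m where "y = (r, s, m)" "r + 2 * s + 2 * m + 1 = n" "3 \<le> s" "odd s"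
        unfolding DC_def by auto
      then show "y \<in> g ` P"
        unfolding P_def g_def by (intro image_eqI[of _ _ "(m, s)"]) auto
    qed
    show "g ` P \<subseteq> DC n" unfolding P_def g_def DC_def by auto
  qed
  have "inj_on g P" unfolding inj_on_def g_def P_def by auto
  then have "(\<Sum>(r, s, m)\<in>DC n. F r s m) = (\<Sum>x\<in>P. (\<lambda>(r, s, m). F r s m) (g x))"
    unfolding img by (rule sum.reindex[unfolded o_def])
  also have "\<dots> = (\<Sum>x\<in>P. F (n - (2 * fst x + 2 * snd x + 1)) (snd x) (fst x))"
    by (simp add: g_def case_prod_beta)
  also have "\<dots> = (\<Sum>m<n. \<Sum>s<n. if 3 \<le> s \<and> odd s \<and> 2 * m + 2 * s + 1 \<le> n
      then F (n - (2 * m + 2 * s + 1)) s m else 0)"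
    unfolding P_def sum.inter_filter[OF finite_cartesian_product[OF finite_lessThan finite_lessThan]]
      sum.cartesian_product by (intro sum.cong) auto
  finally show ?thesis .
qed

context affine_weight
begin

lemma pdt_w_times_I2:
  "pdt w z * I2 n l w z =
     (\<Sum>k\<in>{k. k \<le> n \<and> even k}. binom_sign n k * monomial (n - k) 0 0 k z)
     - real (n choose 2) * (\<Sum>j\<in>{j. j \<le> n - 2 \<and> odd j}. binom_sign (n - 2) j * monomial (n - 2 - j) 1 0 j z)"
proof -
  obtain t x where z: "z = (t, x)" by (cases z) auto
  show ?thesis unfolding z I2_def monomial_def binom_sign_def
    by (simp add: right_diff_distrib sum_distrib_left mult_ac)
qed

definition I2_normal_form :: "nat \<Rightarrow> real \<times> real \<Rightarrow> real" where
  "I2_normal_form n z =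
     (\<Sum>k\<in>{k. k \<le> n \<and> even k}. binom_sign n k * normal_form (n - k) 0 0 k z)
     - real (n choose 2) * (\<Sum>j\<in>{j. j \<le> n - 2 \<and> odd j}. binom_sign (n - 2) j * normal_form (n - 2 - j) 1 0 j z)"

lemma divergence_form_pdt_w_times_I2_minus_normal_form:
  "divergence_form (\<lambda>z. pdt w z * I2 n l w z - I2_normal_form n z)"
proof -
  have "divergence_form (\<lambda>z. 1 * (\<Sum>k\<in>{k. k \<le> n \<and> even k}. binom_sign n k *
        (monomial (n - k) 0 0 (0 + k) z - normal_form (n - k) 0 0 k z))
      + (- real (n choose 2)) * (\<Sum>j\<in>{j. j \<le> n - 2 \<and> odd j}. binom_sign (n - 2) j *
        (monomial (n - 2 - j) 1 0 (0 + j) z - normal_form (n - 2 - j) 1 0 j z)))"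
    by (intro divergence_form_lincomb divergence_form_sum divergence_form_scale
        divergence_form_monomial_minus_normal_form) auto
  then show ?thesis
    by (rule divergence_form_cong)
      (simp add: pdt_w_times_I2 I2_normal_form_def right_diff_distrib sum_subtractf algebra_simps)
qed

lemma sum_even_normal_form:
  "(\<Sum>k\<in>{k. k \<le> n \<and> even k}. binom_sign n k * normal_form (n - k) 0 0 k z) =
   (\<Sum>m<n. \<Sum>s<n. (if 2 * m + s + 1 \<in> {k. k \<le> n \<and> even k}
      then binom_sign n (2 * m + s + 1) * normal_coeff (n - (2 * m + s + 1)) m s else 0)
    * monomial (n - (2 * m + 2 * s + 1)) s m (m + 1) z)"
proof -
  define G where "G k m s = binom_sign n k * normal_coeff (n - k) m s * monomial (n - k - s) s m (m + 1) z" for k m s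
  have "(\<Sum>k\<in>{k. k \<le> n \<and> even k}. binom_sign n k * normal_form (n - k) 0 0 k z)
      = (\<Sum>k\<in>{k. k \<le> n \<and> even k}. \<Sum>m < (k + 1) div 2. G k m (k - 1 - 2 * m))"
    unfolding normal_form_def sum_distrib_left G_def by (simp add: mult.assoc)
  also have "\<dots> = (\<Sum>m<n. \<Sum>s<n. if 2 * m + s + 1 \<in> {k. k \<le> n \<and> even k} then G (2 * m + s + 1) m s else 0)"
    by (rule sum_split_odd_reindex) auto
  also have "\<dots> = (\<Sum>m<n. \<Sum>s<n. (if 2 * m + s + 1 \<in> {k. k \<le> n \<and> even k}
      then binom_sign n (2 * m + s + 1) * normal_coeff (n - (2 * m + s + 1)) m s else 0)
    * monomial (n - (2 * m + 2 * s + 1)) s m (m + 1) z)"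
    by (intro sum.cong refl) (simp add: G_def ac_simps)
  finally show ?thesis .
qed

lemma sum_odd_normal_form:
  assumes "n \<ge> 2"
  shows "(\<Sum>j\<in>{j. j \<le> n - 2 \<and> odd j}. binom_sign (n - 2) j * normal_form (n - 2 - j) 1 0 j z) =
   (\<Sum>m<n. \<Sum>s<n. (if s = 0 then 0 else if 2 * m + s \<in> {j. j \<le> n - 2 \<and> odd j}
      then binom_sign (n - 2) (2 * m + s) * normal_coeff (n - 2 - (2 * m + s)) m (s - 1) else 0)
    * monomial (n - (2 * m + 2 * s + 1)) s m (m + 1) z)"
proof -
  define G where "G j m s = binom_sign (n - 2) j * normal_coeff (n - 2 - j) m s
    * monomial (n - 2 - j - s) (Suc s) m (m + 1) z" for j m s
  define H where "H m s = (if 2 * m + s + 1 \<in> {j. j \<le> n - 2 \<and> odd j} then G (2 * m + s + 1) m s else 0)" for m s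
  have "(\<Sum>j\<in>{j. j \<le> n - 2 \<and> odd j}. binom_sign (n - 2) j * normal_form (n - 2 - j) 1 0 j z)
      = (\<Sum>j\<in>{j. j \<le> n - 2 \<and> odd j}. \<Sum>m < (j + 1) div 2. G j m (j - 1 - 2 * m))"
    unfolding normal_form_def sum_distrib_left G_def by (simp add: mult.assoc)
  also have "\<dots> = (\<Sum>m<n. \<Sum>s<n. H m s)"
    unfolding H_def by (rule sum_split_odd_reindex) auto
  also have "\<dots> = (\<Sum>m<n. \<Sum>s<n. if s = 0 then 0 else H m (s - 1))"
    using assms by (intro sum.cong refl sum_lessThan_shift) (auto simp: H_def)
  also have "\<dots> = (\<Sum>m<n. \<Sum>s<n. (if s = 0 then 0 else if 2 * m + s \<in> {j. j \<le> n - 2 \<and> odd j}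
      then binom_sign (n - 2) (2 * m + s) * normal_coeff (n - 2 - (2 * m + s)) m (s - 1) else 0)
    * monomial (n - (2 * m + 2 * s + 1)) s m (m + 1) z)"
  proof (intro sum.cong refl)
    fix m s
    show "(if s = 0 then 0 else H m (s - 1)) = (if s = 0 then 0 else if 2 * m + s \<in> {j. j \<le> n - 2 \<and> odd j}
      then binom_sign (n - 2) (2 * m + s) * normal_coeff (n - 2 - (2 * m + s)) m (s - 1) else 0)
      * monomial (n - (2 * m + 2 * s + 1)) s m (m + 1) z"
      by (cases s) (simp_all add: H_def G_def ac_simps)
  qed
  finally show ?thesis .
qed

lemma I2_normal_form_eq:
  assumes "n \<ge> 2"
  shows "I2_normal_form n z = (\<Sum>(r, s, m)\<in>DC n. dC n r s m * (pdx l z) ^ r * (pdx (pdx l) z) ^ s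
     * (pdx ^^ m) (pdt w) z * (pdx ^^ (m + 1)) w z)"
proof -
  have "I2_normal_form n z = (\<Sum>m<n. \<Sum>s<n. (if 3 \<le> s \<and> odd s \<and> 2 * m + 2 * s + 1 \<le> n
      then dC n (n - (2 * m + 2 * s + 1)) s m else 0) * monomial (n - (2 * m + 2 * s + 1)) s m (m + 1) z)"
    unfolding I2_normal_form_def sum_even_normal_form sum_odd_normal_form[OF assms]
      collected_coeff[symmetric]
    by (simp add: sum_distrib_left sum_subtractf left_diff_distrib mult.assoc)
  also have "\<dots> = (\<Sum>(r, s, m)\<in>DC n. dC n r s m * (pdx l z) ^ r * (pdx (pdx l) z) ^ s
     * (pdx ^^ m) (pdt w) z * (pdx ^^ (m + 1)) w z)"
    unfolding sum_DC by (intro sum.cong refl) (simp add: monomial_def)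
  finally show ?thesis .
qed

end

theorem proposition4p1:
  fixes n :: nat and x0 t0 \<beta> lam :: real
    and w l :: "real \<times> real \<Rightarrow> real"
  assumes "n \<ge> 2" and "\<beta> > 0" and "lam > 0"
    and "l = (\<lambda>(t, x). lam * ((x - x0)^2 - \<beta> * (t - t0)^2))"
    and "smooth2 w"
  shows "\<exists>A B :: bterm list.
     (\<forall>t x. pdt w (t, x) * I2 n l w (t, x) =
        pdt (expr_val l w A) (t, x) + pdx (expr_val l w B) (t, x)
        + (\<Sum>(r, s, m)\<in>DC n. dC n r s m * (pdx l (t, x)) ^ r * (pdx (pdx l) (t, x)) ^ s
             * (pdx ^^ m) (pdt w) (t, x) * (pdx ^^ (m + 1)) w (t, x)))
   \<and> (n \<le> 6 \<longrightarrow> (\<forall>t x. pdt w (t, x) * I2 n l w (t, x) =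
        pdt (expr_val l w A) (t, x) + pdx (expr_val l w B) (t, x)))"
proof -
  have "pdx l (t, x) = 2 * lam * x + - 2 * lam * x0" for t x
    unfolding assms(4) by (rule pdx_eqI) (auto intro!: derivative_eq_intros simp: algebra_simps)
  then interpret affine_weight w l "2 * lam" "- 2 * lam * x0"
    using assms(5) by unfold_locales auto
  obtain A B where AB: "\<And>t x. pdt w (t, x) * I2 n l w (t, x) - I2_normal_form n (t, x)
      = pdt (expr_val l w A) (t, x) + pdx (expr_val l w B) (t, x)"
    using divergence_form_pdt_w_times_I2_minus_normal_form unfolding divergence_form_def by blast
  have "DC n = {}" if "n \<le> 6" using that unfolding DC_def by auto
  then show ?thesis
    using AB I2_normal_form_eq[OF assms(1)] by (intro exI[of _ A] exI[of _ B]) (simp add: algebra_simps)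
qed

end
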